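(* Let $\pi$ be a positive, differentiable probability density on $\mathbb{R}^d$ and let $\Sigma$ be a symmetric positive definite $d\times d$ matrix. Let $P_\Sigma$ be the Markov kernel of the discretized Langevin algorithm: from $\theta$, set $\theta'=\theta+\frac{\Sigma}{2}\nabla\log\pi(\theta)+\eta$ with $\eta\sim\mathcal{N}(0,\Sigma)$. For each $\theta$ let $F_\theta$ be a probability distribution on an auxiliary space $\mathcal{Y}$ and let $\hat\nabla^{y}\log\pi(\theta)\in\mathbb{R}^d$ be a measurable estimate of the gradient depending on $y\in\mathcal{Y}$. Let $\hat P_\Sigma$ be the kernel of the noisy Langevin algorithm: from $\theta$, draw $y\sim F_\theta$ and set $\theta'=\theta+\frac{\Sigma}{2}\hat\nabla^{y}\log\pi(\theta)+\eta$ with $\eta\sim\mathcal{N}(0,\Sigma)$ independent of $y$. Define $$\delta=\sup_{\theta}\ \mathbb{E}_{y\sim F_\theta}\Big\{\exp\Big[\tfrac12\big\|\Sigma^{1/2}\big(\nabla\log\pi(\theta)-\hat\nabla^{y}\log\pi(\theta)\big)\big\|^2\Big]-1\Big\}.$$ Then $\|P_\Sigma-\hat P_\Sigma\|\le\sqrt{\delta/2}$.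
   Context: For two Markov kernels $P,Q$ on $\Theta$, $\|P-Q\|=\sup_{\theta\in\Theta}\|\delta_\theta P-\delta_\theta Q\|$, where for probability measures $\|\mu-\nu\|=\sup_A|\mu(A)-\nu(A)|$ is the total variation distance. *)

theory Defs
  imports "HOL-Analysis.Analysis" "HOL-Probability.Probability"
begin

definition gaussian :: "real^'n \<Rightarrow> real^'n^'n \<Rightarrow> (real^'n) measure" where
  "gaussian m S = density lborel (\<lambda>x. ennreal
      (exp (- ((x - m) \<bullet> (matrix_inv S *v (x - m))) / 2)
        / sqrt ((2 * pi) ^ CARD('n) * det S)))"

definition tv_dist :: "'a measure \<Rightarrow> 'a measure \<Rightarrow> real" where
  "tv_dist M N = (SUP A \<in> sets M. \<bar>measure M A - measure N A\<bar>)"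

definition kernel_dist :: "('a \<Rightarrow> 'b measure) \<Rightarrow> ('a \<Rightarrow> 'b measure) \<Rightarrow> real" where
  "kernel_dist P Q = (SUP \<theta>. tv_dist (P \<theta>) (Q \<theta>))"

end

theory Submission
  imports Defs
begin

text \<open>
  For the Gaussians \<open>N(m\<^sub>1, \<Sigma>)\<close>, \<open>N(m\<^sub>2, \<Sigma>)\<close> with densities \<open>p\<close>, \<open>q\<close>, the chi-square
  divergence \<open>\<integral> (q - p)\<^sup>2 / p\<close> equals \<open>exp Q - 1\<close> with \<open>Q = (m\<^sub>2 - m\<^sub>1) \<bullet> \<Sigma>\<inverse> (m\<^sub>2 - m\<^sub>1)\<close>, and the
  pointwise inequality \<open>q \<le> p + t/2 (q - p)\<^sup>2 / p + p / (2t)\<close> turns it into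
  \<open>|N(m\<^sub>2, \<Sigma>)(A) - N(m\<^sub>1, \<Sigma>)(A)| \<le> t/2 (exp Q - 1) + 1/(2t)\<close> for every \<open>t > 0\<close>.
  The mean of the exact Langevin step and that of the noisy step with auxiliary draw \<open>y\<close> differ by
  \<open>\<Sigma>/2 (g\<^sub>y - \<nabla>)\<close>, where \<open>g\<^sub>y\<close> is the gradient estimate, so \<open>Q = r/4\<close> with
  \<open>r = \<parallel>S (\<nabla> - g\<^sub>y)\<parallel>\<^sup>2\<close>, and \<open>exp (r/4) - 1 \<le> (exp (r/2) - 1)/2\<close>. Averaging over
  \<open>y \<sim> F\<^sub>\<theta>\<close> bounds the difference of the two kernels on every set by \<open>t/4 \<delta> + 1/(2t)\<close>, and
  optimising over \<open>t\<close> gives \<open>sqrt (\<delta>/2)\<close>.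
\<close>

section \<open>Linear change of variables\<close>

lemma measure_swap_coordinates_cbox:
  fixes a b :: "real^'n"
  shows "measure lebesgue ((\<lambda>x. \<chi> i. x $ Transposition.transpose m n i) ` cbox a b)
       = measure lebesgue (cbox a b)"
proof (cases "cbox a b = {}")
  case False
  let ?h = "\<lambda>x::real^'n. \<chi> i. x $ Transposition.transpose m n i"
  have image: "?h ` cbox a b = cbox (?h a) (?h b)"
    by (auto simp: image_iff lambda_swap_Galois mem_box_cart) (metis transpose_involutory)+
  with False have "cbox (?h a) (?h b) \<noteq> {}"
    by auto
  then show ?thesis
    using False prod.permute [OF permutes_swap_id, where S=UNIV and g="\<lambda>i. (b - a)$i", symmetric]
    by (simp add: image content_cbox_cart)
qed simp

lemma measure_shear_cbox:
  fixes a b :: "real^'n"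
  assumes "m \<noteq> n"
  shows "measure lebesgue ((\<lambda>x. \<chi> i. if i = m then x$m + x$n else x$i) ` cbox a b)
       = measure lebesgue (cbox a b)"
proof (cases "cbox a b = {}")
  case False
  let ?h = "\<lambda>x::real^'n. \<chi> i. if i = m then x$m + x$n else x$i"
  define v :: "real^'n" where "v = (\<chi> i. if i = n then - a $ n else 0)"
  define w :: "real^'n" where "w = (\<chi> i. if i = m \<or> i = n then a $ n else 0)"
  \<comment> \<open>\<open>measure_shear_interval\<close> needs \<open>0 \<le> a $ n\<close>, so first translate the box by \<open>v\<close>\<close>
  have "?h ` cbox a b = (+) w ` ?h ` (+) v ` cbox a b"
    using assms unfolding image_comp o_def by (force simp: vec_eq_iff v_def w_def)
  then have "measure lebesgue (?h ` cbox a b) = measure lebesgue (?h ` cbox (v + a) (v + b))"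
    by (simp add: measure_translation cbox_translation)
  also have "\<dots> = measure lebesgue (cbox (v + a) (v + b))"
  proof (rule measure_shear_interval)
    show "cbox (v + a) (v + b) \<noteq> {}"
      using False by (metis cbox_translation image_is_empty)
  qed (use assms in \<open>auto simp: v_def\<close>)
  also have "\<dots> = measure lebesgue (cbox a b)"
    by (metis cbox_translation measure_translation)
  finally show ?thesis .
qed simp

lemma abs_det_matrix_swap_coordinates:
  "\<bar>det (matrix (\<lambda>x::real^'n. \<chi> i. x $ Transposition.transpose m n i))\<bar> = 1"
proof -
  have "(\<chi> i j. if Transposition.transpose m n i = j then 1 else 0)
      = (\<chi> i j. if j = Transposition.transpose m n i then 1 else (0::real))"
    by (auto intro!: Cart_lambda_cong)
  then have "matrix (\<lambda>x::real^'n. \<chi> i. x $ Transposition.transpose m n i)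
      = transpose (\<chi> i j. mat 1 $ i $ Transposition.transpose m n j)"
    by (auto simp: matrix_eq transpose_def axis_def mat_def matrix_def)
  then show ?thesis
    by (simp add: det_permute_columns permutes_swap_id sign_swap_id abs_mult)
qed

lemma det_matrix_shear:
  assumes "m \<noteq> n"
  shows "det (matrix (\<lambda>x::real^'n. \<chi> i. if i = m then x$m + x$n else x$i)) = 1"
proof -
  have "matrix (\<lambda>x::real^'n. \<chi> i. if i = m then x$m + x$n else x$i)
      = (\<chi> k. if k = m then row m (mat 1) + 1 *s row n (mat 1) else row k (mat 1))"
    using assms by (auto simp: vec_eq_iff matrix_def mat_def row_def axis_def)
  then show ?thesis
    using assms by (simp add: det_row_operation)
qed

text \<open>\<open>Change_Of_Vars\<close> proves this only for index types of class \<open>wellorder\<close>.\<close>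

proposition
  fixes f :: "real^'n \<Rightarrow> real^'n"
  assumes "linear f" and "S \<in> lmeasurable"
  shows lmeasurable_linear_image_cart: "f ` S \<in> lmeasurable"
    and measure_linear_image_cart:
      "measure lebesgue (f ` S) = \<bar>det (matrix f)\<bar> * measure lebesgue S"
proof -
  let ?P = "\<lambda>f::real^'n \<Rightarrow> real^'n. \<forall>S \<in> lmeasurable.
    f ` S \<in> lmeasurable \<and> measure lebesgue (f ` S) = \<bar>det (matrix f)\<bar> * measure lebesgue S"
  have "?P f"
  proof (rule induct_linear_elementary[OF \<open>linear f\<close>]; intro ballI)
    fix f g :: "real^'n \<Rightarrow> real^'n" and S :: "(real^'n) set"
    assume "linear f" "linear g" and f: "?P f" and g: "?P g" and S: "S \<in> lmeasurable"
    with g have gS: "g ` S \<in> lmeasurable" by blast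
    from f[rule_format, OF gS] g[rule_format, OF S] show "(f \<circ> g) ` S \<in> lmeasurable \<and>
        measure lebesgue ((f \<circ> g) ` S) = \<bar>det (matrix (f \<circ> g))\<bar> * measure lebesgue S"
      using matrix_compose[OF \<open>linear g\<close> \<open>linear f\<close>]
      by (simp add: image_comp abs_mult det_mul)
  next
    fix f :: "real^'n \<Rightarrow> real^'n" and i and S :: "(real^'n) set"
    assume "linear f" and "\<And>x. f x $ i = 0"
    then have "\<not> inj f"
      by (metis (full_types) linear_injective_imp_surjective one_neq_zero surjE vec_component)
    then have "det (matrix f) = 0"
      using det_nz_iff_inj[OF \<open>linear f\<close>] by blast
    moreover have "negligible (f ` S)"
      using negligible_linear_singular_image[OF \<open>linear f\<close> \<open>\<not> inj f\<close>] .
    ultimately show "f ` S \<in> lmeasurable \<and>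
        measure lebesgue (f ` S) = \<bar>det (matrix f)\<bar> * measure lebesgue S"
      by (simp add: negligible_imp_measurable negligible_imp_measure0)
  next
    fix c :: "'n \<Rightarrow> real" and S :: "(real^'n) set"
    assume "S \<in> lmeasurable"
    then show "(\<lambda>x. \<chi> i. c i * x $ i) ` S \<in> lmeasurable \<and>
        measure lebesgue ((\<lambda>x. \<chi> i. c i * x $ i) ` S)
          = \<bar>det (matrix (\<lambda>x. \<chi> i. c i * x $ i))\<bar> * measure lebesgue S"
      by (simp add: measurable_stretch measure_stretch axis_def matrix_def det_diagonal)
  next
    fix m n :: 'n and S :: "(real^'n) set"
    assume "m \<noteq> n" and S: "S \<in> lmeasurable"
    let ?h = "\<lambda>x::real^'n. \<chi> i. x $ Transposition.transpose m n i"
    have lin: "linear ?h"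
      by (rule linearI) (simp_all add: plus_vec_def scaleR_vec_def)
    show "?h ` S \<in> lmeasurable \<and>
        measure lebesgue (?h ` S) = \<bar>det (matrix ?h)\<bar> * measure lebesgue S"
      using measure_linear_sufficient[OF lin S] measure_swap_coordinates_cbox[of m n]
        abs_det_matrix_swap_coordinates[of m n]
      by force
  next
    fix m n :: 'n and S :: "(real^'n) set"
    assume "m \<noteq> n" and S: "S \<in> lmeasurable"
    let ?h = "\<lambda>x::real^'n. \<chi> i. if i = m then x$m + x$n else x$i"
    have lin: "linear ?h"
      by (rule linearI) (auto simp: algebra_simps vec_eq_iff)
    show "?h ` S \<in> lmeasurable \<and>
        measure lebesgue (?h ` S) = \<bar>det (matrix ?h)\<bar> * measure lebesgue S"
      using measure_linear_sufficient[OF lin S] measure_shear_cbox[OF \<open>m \<noteq> n\<close>]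
        det_matrix_shear[OF \<open>m \<noteq> n\<close>]
      by force
  qed
  with \<open>S \<in> lmeasurable\<close> show "f ` S \<in> lmeasurable"
      "measure lebesgue (f ` S) = \<bar>det (matrix f)\<bar> * measure lebesgue S"
    by auto
qed

lemma borel_measurable_linear:
  fixes f :: "'a::euclidean_space \<Rightarrow> 'b::euclidean_space"
  assumes "linear f"
  shows "f \<in> borel_measurable borel"
  using assms by (intro borel_measurable_continuous_onI linear_continuous_on)
    (simp add: linear_conv_bounded_linear)

lemma lborel_eq_density_distr_linear:
  fixes f :: "real^'n \<Rightarrow> real^'n"
  assumes f: "linear f" and det: "det (matrix f) \<noteq> 0"
  shows "lborel = density (distr lborel borel f) (\<lambda>_. ennreal \<bar>det (matrix f)\<bar>)"
proof (rule lborel_eqI)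
  have "inj f"
    using det det_nz_iff_inj[OF f] by blast
  then obtain g where g: "linear g" and gf: "\<And>x. g (f x) = x" and fg: "\<And>x. f (g x) = x"
    using linear_injective_isomorphism[OF f] by metis
  have "f \<circ> g = id"
    using fg by auto
  then have "det (matrix f) * det (matrix g) = 1"
    using matrix_compose[OF g f] det_mul by (metis matrix_id)
  then have det_fg: "\<bar>det (matrix f)\<bar> * \<bar>det (matrix g)\<bar> = 1"
    by (metis abs_mult abs_one)
  fix l u :: "real^'n"
  assume "\<And>b. b \<in> Basis \<Longrightarrow> l \<bullet> b \<le> u \<bullet> b"
  then have box: "emeasure lborel (box l u) = (\<Prod>b\<in>Basis. (u - l) \<bullet> b)"
    by (simp add: emeasure_lborel_box_eq)
  have vimage: "f -` box l u = g ` box l u"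
    using fg gf by (auto simp: image_iff) metis
  have "open (f -` box l u)"
    using f by (intro continuous_open_vimage open_box) (simp add: linear_continuous_at linear_linear)
  then have "emeasure lborel (g ` box l u) = emeasure lebesgue (g ` box l u)"
    by (simp add: vimage emeasure_completion)
  also have "\<dots> = ennreal (\<bar>det (matrix g)\<bar> * measure lebesgue (box l u))"
    using lmeasurable_linear_image_cart[OF g] measure_linear_image_cart[OF g]
    by (simp add: emeasure_eq_measure2)
  finally have "emeasure (density (distr lborel borel f) (\<lambda>_. ennreal \<bar>det (matrix f)\<bar>)) (box l u)
      = ennreal (\<bar>det (matrix f)\<bar> * (\<bar>det (matrix g)\<bar> * measure lebesgue (box l u)))"
    using borel_measurable_linear[OF f] by (simp add: emeasure_density_const emeasure_distr vimage ennreal_mult)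
  also have "\<dots> = emeasure lborel (box l u)"
    using det_fg by (simp add: mult.assoc[symmetric] emeasure_eq_measure2 measure_completion)
  finally show "emeasure (density (distr lborel borel f) (\<lambda>_. ennreal \<bar>det (matrix f)\<bar>)) (box l u)
      = (\<Prod>b\<in>Basis. (u - l) \<bullet> b)"
    using box by simp
qed simp

lemma nn_integral_lborel_affine:
  fixes f :: "real^'n \<Rightarrow> real^'n" and h :: "real^'n \<Rightarrow> ennreal"
  assumes f: "linear f" and det: "det (matrix f) \<noteq> 0" and h[measurable]: "h \<in> borel_measurable borel"
  shows "(\<integral>\<^sup>+ x. h x \<partial>lborel) = ennreal \<bar>det (matrix f)\<bar> * (\<integral>\<^sup>+ y. h (f y + c) \<partial>lborel)"
proof -
  note [measurable] = borel_measurable_linear[OF f]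
  have "(\<integral>\<^sup>+ x. h x \<partial>lborel) = (\<integral>\<^sup>+ x. h (x + c) \<partial>lborel)"
    by (subst lborel_distr_plus[where c = c, symmetric]) (simp add: nn_integral_distr add.commute)
  also have "\<dots> = (\<integral>\<^sup>+ x. h (x + c) \<partial>density (distr lborel borel f) (\<lambda>_. ennreal \<bar>det (matrix f)\<bar>))"
    using lborel_eq_density_distr_linear[OF f det] by simp
  also have "\<dots> = ennreal \<bar>det (matrix f)\<bar> * (\<integral>\<^sup>+ y. h (f y + c) \<partial>lborel)"
    by (simp add: nn_integral_density nn_integral_distr nn_integral_cmult)
  finally show ?thesis .
qed

section \<open>Gaussian integrals and elementary estimates\<close>

lemma nn_integral_exp_neg_square_half:
  "(\<integral>\<^sup>+ x. ennreal (exp (- x\<^sup>2 / 2)) \<partial>lborel) = ennreal (sqrt (2 * pi))"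
proof -
  interpret prob_space "density lborel std_normal_density"
    by (rule prob_space_normal_density) simp
  have "\<And>x. ennreal (exp (- x\<^sup>2 / 2)) = ennreal (sqrt (2 * pi)) * ennreal (std_normal_density x)"
    by (simp add: std_normal_density_def ennreal_mult[symmetric] del: ennreal_mult')
  with emeasure_space_1 show ?thesis
    by (simp add: emeasure_density nn_integral_cmult)
qed

lemma nn_integral_exp_neg_inner_half:
  "(\<integral>\<^sup>+ x. ennreal (exp (- (x \<bullet> x) / 2)) \<partial>(lborel::'a::euclidean_space measure))
    = ennreal (sqrt (2 * pi) ^ DIM('a))"
proof -
  interpret product_sigma_finite "\<lambda>_. lborel::real measure" ..
  let ?T = "\<lambda>f. \<Sum>b\<in>(Basis::'a set). f b *\<^sub>R b"
  have "(\<integral>\<^sup>+ x. ennreal (exp (- (x \<bullet> x) / 2)) \<partial>(lborel::'a measure))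
     = (\<integral>\<^sup>+ f. ennreal (exp (- (?T f \<bullet> ?T f) / 2)) \<partial>(\<Pi>\<^sub>M b\<in>Basis. lborel))"
    by (subst lborel_eq) (simp add: nn_integral_distr)
  also have "\<dots> = (\<integral>\<^sup>+ f. (\<Prod>b\<in>(Basis::'a set). ennreal (exp (- (f b)\<^sup>2 / 2))) \<partial>(\<Pi>\<^sub>M b\<in>Basis. lborel))"
  proof (intro nn_integral_cong)
    fix f :: "'a \<Rightarrow> real"
    have "?T f \<bullet> b = f b" if "b \<in> Basis" for b
      using that by (simp add: inner_sum_left inner_Basis if_distrib sum.If_cases)
    then have "?T f \<bullet> ?T f = (\<Sum>b\<in>Basis. (f b)\<^sup>2)"
      by (subst euclidean_inner) (simp add: power2_eq_square)
    then show "ennreal (exp (- (?T f \<bullet> ?T f) / 2)) = (\<Prod>b\<in>Basis. ennreal (exp (- (f b)\<^sup>2 / 2)))"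
      by (simp add: exp_sum[symmetric] sum_divide_distrib[symmetric] sum_negf prod_ennreal)
  qed
  also have "\<dots> = (\<Prod>b\<in>(Basis::'a set). (\<integral>\<^sup>+ x. ennreal (exp (- x\<^sup>2 / 2)) \<partial>lborel))"
    by (rule product_nn_integral_prod) auto
  also have "\<dots> = ennreal (sqrt (2 * pi) ^ DIM('a))"
    by (simp only: prod_constant nn_integral_exp_neg_square_half) (simp add: ennreal_power)
  finally show ?thesis .
qed

lemma inner_matrix_vector_mult_symmetric:
  fixes A :: "real^'n^'n"
  assumes "transpose A = A"
  shows "(A *v x) \<bullet> y = x \<bullet> (A *v y)"
  by (metis assms dot_lmul_matrix transpose_matrix_vector)

lemma matrix_vector_mult_uminus_right: "A *v (- x) = - (A *v x)"
  for A :: "'a::ring_1^'n^'m"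
  using matrix_vector_mult_diff_distrib[of A 0 x] by simp

lemma borel_measurable_matrix_vector_mult [measurable]:
  fixes A :: "real^'n^'m"
  assumes "f \<in> borel_measurable M"
  shows "(\<lambda>x. A *v f x) \<in> borel_measurable M"
  using measurable_compose[OF assms borel_measurable_linear[of "(*v) A"]] by simp

lemma borel_measurable_quadratic_form [measurable]:
  fixes A :: "real^'n^'n"
  shows "(\<lambda>x. x \<bullet> (A *v x)) \<in> borel_measurable borel"
  by (intro borel_measurable_continuous_onI continuous_intros)

lemma le_add_chi_square_term:
  fixes p q t :: real
  assumes "p > 0" "t > 0"
  shows "q \<le> p + t / 2 * ((q - p)\<^sup>2 / p) + p / (2 * t)"
proof -
  have "2 * t * p * (q - p) \<le> (t * (q - p))\<^sup>2 + p\<^sup>2"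
    using sum_squares_bound[of "t * (q - p)" p] by (simp add: algebra_simps power2_eq_square)
  then show ?thesis
    using assms by (simp add: field_simps power2_eq_square)
qed

lemma exp_minus_one_le_half_exp_double:
  fixes x :: real
  shows "exp x - 1 \<le> (exp (2 * x) - 1) / 2"
proof -
  have "0 \<le> (exp x - 1)\<^sup>2"
    by simp
  then show ?thesis
    by (simp add: power2_eq_square algebra_simps mult_exp_exp)
qed

lemma le_sqrt_of_forall_pos_le:
  fixes a d :: real
  assumes "d \<ge> 0" and le: "\<And>t. t > 0 \<Longrightarrow> a \<le> t / 4 * d + 1 / (2 * t)"
  shows "a \<le> sqrt (d / 2)"
proof (cases "d = 0")
  case True
  show ?thesis
  proof (rule ccontr)
    assume "\<not> ?thesis"
    with True have "a > 0"
      by simp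
    with True le[of "1 / a"] show False
      by (simp add: field_simps)
  qed
next
  case False
  with \<open>d \<ge> 0\<close> have "d > 0"
    by simp
  text \<open>The bound is minimised at \<open>t = sqrt (2 / d)\<close>.\<close>
  define t where "t = sqrt 2 / sqrt d"
  have "t > 0"
    using \<open>d > 0\<close> by (simp add: t_def)
  have "t / 4 * d = sqrt 2 * sqrt d / 4"
    using \<open>d > 0\<close> real_sqrt_mult_self[of d] by (simp add: t_def field_simps)
  moreover have "1 / (2 * t) = sqrt 2 * sqrt d / 4"
    using \<open>d > 0\<close> by (simp add: t_def field_simps)
  moreover have "sqrt 2 * sqrt d / 2 = sqrt (d / 2)"
    by (simp add: real_sqrt_divide field_simps)
  ultimately show ?thesis
    using le[OF \<open>t > 0\<close>] by simp
qed

lemma tv_dist_le_sqrt: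
  assumes "d \<ge> 0"
    and le: "\<And>A t. A \<in> sets M \<Longrightarrow> t > 0 \<Longrightarrow> \<bar>measure M A - measure N A\<bar> \<le> t / 4 * d + 1 / (2 * t)"
  shows "tv_dist M N \<le> sqrt (d / 2)"
  unfolding tv_dist_def
proof (rule cSUP_least)
  show "sets M \<noteq> {}"
    using sets.empty_sets by blast
qed (use assms le_sqrt_of_forall_pos_le in blast)

lemma emeasure_density_le_chi_square:
  fixes p q :: "'a \<Rightarrow> real"
  assumes [measurable]: "p \<in> borel_measurable M" "q \<in> borel_measurable M" "A \<in> sets M"
    and p_pos: "\<And>x. x \<in> space M \<Longrightarrow> p x > 0" and "t > 0"
  shows "emeasure (density M q) A \<le> emeasure (density M p) A
    + ennreal (t / 2) * (\<integral>\<^sup>+ x. ennreal ((q x - p x)\<^sup>2 / p x) \<partial>M)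
    + ennreal (1 / (2 * t)) * (\<integral>\<^sup>+ x. ennreal (p x) \<partial>M)"
proof -
  have "emeasure (density M q) A = (\<integral>\<^sup>+ x. ennreal (q x) * indicator A x \<partial>M)"
    by (simp add: emeasure_density)
  also have "\<dots> \<le> (\<integral>\<^sup>+ x. ennreal (p x) * indicator A x
      + (ennreal (t / 2) * ennreal ((q x - p x)\<^sup>2 / p x) + ennreal (1 / (2 * t)) * ennreal (p x)) \<partial>M)"
  proof (intro nn_integral_mono)
    fix x
    assume "x \<in> space M"
    with p_pos have "p x > 0" by blast
    then have nonneg: "0 \<le> (q x - p x)\<^sup>2 / p x" "0 \<le> p x"
      by simp_all
    have "q x \<le> p x + (t / 2 * ((q x - p x)\<^sup>2 / p x) + 1 / (2 * t) * p x)"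
      using le_add_chi_square_term[of "p x" t "q x"] p_pos \<open>x \<in> space M\<close> \<open>t > 0\<close> by simp
    then have "ennreal (q x) \<le> ennreal (p x + (t / 2 * ((q x - p x)\<^sup>2 / p x) + 1 / (2 * t) * p x))"
      by (rule ennreal_leI)
    also have "\<dots> = ennreal (p x)
        + (ennreal (t / 2) * ennreal ((q x - p x)\<^sup>2 / p x) + ennreal (1 / (2 * t)) * ennreal (p x))"
    proof -
      have split: "ennreal (a + (b * c + d * a)) = ennreal a + (ennreal b * ennreal c + ennreal d * ennreal a)"
        if "0 \<le> a" "0 \<le> b" "0 \<le> c" "0 \<le> d" for a b c d :: real
        using that by (simp add: ennreal_mult)
      show ?thesis
        by (rule split) (use nonneg \<open>t > 0\<close> in auto)
    qed
    finally have "ennreal (q x) \<le> \<dots>" .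
    then show "ennreal (q x) * indicator A x \<le> ennreal (p x) * indicator A x
        + (ennreal (t / 2) * ennreal ((q x - p x)\<^sup>2 / p x) + ennreal (1 / (2 * t)) * ennreal (p x))"
      by (cases "x \<in> A") auto
  qed
  also have "\<dots> = emeasure (density M p) A
    + ennreal (t / 2) * (\<integral>\<^sup>+ x. ennreal ((q x - p x)\<^sup>2 / p x) \<partial>M)
    + ennreal (1 / (2 * t)) * (\<integral>\<^sup>+ x. ennreal (p x) \<partial>M)"
    by (simp add: nn_integral_add nn_integral_cmult emeasure_density add.assoc)
  finally show ?thesis .
qed

lemma (in prob_space) nn_integral_affine_le:
  assumes [measurable]: "g \<in> borel_measurable M"
    and g_nonneg: "\<And>x. x \<in> space M \<Longrightarrow> 0 \<le> g x"
    and "a \<ge> 0" "b \<ge> 0" "d \<ge> 0"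
    and int_g: "(\<integral>\<^sup>+ x. ennreal (g x) \<partial>M) \<le> ennreal d"
  shows "(\<integral>\<^sup>+ x. ennreal (a * g x + b) \<partial>M) \<le> ennreal (a * d + b)"
proof -
  have "(\<integral>\<^sup>+ x. ennreal (a * g x + b) \<partial>M) = (\<integral>\<^sup>+ x. ennreal a * ennreal (g x) + ennreal b \<partial>M)"
    using g_nonneg \<open>a \<ge> 0\<close> \<open>b \<ge> 0\<close> by (intro nn_integral_cong) (simp add: ennreal_mult)
  also have "\<dots> = ennreal a * (\<integral>\<^sup>+ x. ennreal (g x) \<partial>M) + ennreal b"
    by (simp add: nn_integral_add nn_integral_cmult emeasure_space_1)
  also have "\<dots> \<le> ennreal a * ennreal d + ennreal b"
    using int_g by (intro add_mono mult_left_mono) auto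
  also have "\<dots> = ennreal (a * d + b)"
    using \<open>a \<ge> 0\<close> \<open>b \<ge> 0\<close> \<open>d \<ge> 0\<close> by (simp add: ennreal_mult)
  finally show ?thesis .
qed

lemma measure_bind_eq_nn_integral:
  assumes F: "prob_space F" and K: "K \<in> measurable F (subprob_algebra N)"
    and K_prob: "\<And>y. y \<in> space F \<Longrightarrow> prob_space (K y)" and A: "A \<in> sets N"
  shows "ennreal (measure (F \<bind> K) A) = (\<integral>\<^sup>+ y. ennreal (measure (K y) A) \<partial>F)"
proof -
  interpret F: prob_space F
    by (rule F)
  interpret FK: prob_space "F \<bind> K"
    using K K_prob by (intro F.prob_space_bind) auto
  have "emeasure (K y) A = ennreal (measure (K y) A)" if "y \<in> space F" for y
    using K_prob[OF that] by (simp add: prob_space.finite_measure finite_measure.emeasure_eq_measure)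
  then show ?thesis
    using emeasure_bind[OF F.not_empty K A]
    by (simp add: FK.emeasure_eq_measure cong: nn_integral_cong)
qed

lemma abs_measure_bind_diff_le:
  assumes F: "prob_space F" and K: "K \<in> measurable F (subprob_algebra N)"
    and K_prob: "\<And>y. y \<in> space F \<Longrightarrow> prob_space (K y)"
    and A: "A \<in> sets N"
    and [measurable]: "b \<in> borel_measurable F"
    and bound: "\<And>y. y \<in> space F \<Longrightarrow> \<bar>measure (K y) A - measure Q A\<bar> \<le> b y"
    and int_b: "(\<integral>\<^sup>+ y. ennreal (b y) \<partial>F) \<le> ennreal c" and "c \<ge> 0"
  shows "\<bar>measure (F \<bind> K) A - measure Q A\<bar> \<le> c"
proof -
  interpret F: prob_space F
    by (rule F)
  have b_nonneg: "0 \<le> b y" if "y \<in> space F" for y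
    using bound[OF that] by linarith
  have [measurable]: "(\<lambda>y. measure (K y) A) \<in> borel_measurable F"
    using measurable_compose[OF K measurable_emeasure_subprob_algebra[OF A]]
    by (simp add: measure_def)
  have bind: "ennreal (measure (F \<bind> K) A) = (\<integral>\<^sup>+ y. ennreal (measure (K y) A) \<partial>F)"
    by (rule measure_bind_eq_nn_integral[OF F K K_prob A])
  have "ennreal (measure (F \<bind> K) A) \<le> (\<integral>\<^sup>+ y. ennreal (measure Q A) + ennreal (b y) \<partial>F)"
    unfolding bind
  proof (intro nn_integral_mono)
    fix y
    assume "y \<in> space F"
    with bound[of y] b_nonneg[of y] show "ennreal (measure (K y) A) \<le> ennreal (measure Q A) + ennreal (b y)"
      by (simp add: ennreal_plus[symmetric] abs_le_iff del: ennreal_plus)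
  qed
  also have "\<dots> \<le> ennreal (measure Q A + c)"
    using int_b \<open>c \<ge> 0\<close> by (simp add: nn_integral_add F.emeasure_space_1 add_left_mono)
  finally have upper: "measure (F \<bind> K) A \<le> measure Q A + c"
    using \<open>c \<ge> 0\<close> by (simp add: ennreal_plus[symmetric] del: ennreal_plus)
  have "ennreal (measure Q A) = (\<integral>\<^sup>+ y. ennreal (measure Q A) \<partial>F)"
    by (simp add: F.emeasure_space_1)
  also have "\<dots> \<le> (\<integral>\<^sup>+ y. ennreal (measure (K y) A) + ennreal (b y) \<partial>F)"
  proof (intro nn_integral_mono)
    fix y
    assume "y \<in> space F"
    with bound[of y] b_nonneg[of y] show "ennreal (measure Q A) \<le> ennreal (measure (K y) A) + ennreal (b y)"
      by (simp add: ennreal_plus[symmetric] abs_le_iff del: ennreal_plus)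
  qed
  also have "\<dots> \<le> ennreal (measure (F \<bind> K) A + c)"
    using int_b \<open>c \<ge> 0\<close> by (simp add: nn_integral_add bind[symmetric] add_left_mono)
  finally have lower: "measure Q A \<le> measure (F \<bind> K) A + c"
    using \<open>c \<ge> 0\<close> by (simp add: ennreal_plus[symmetric] del: ennreal_plus)
  from upper lower show ?thesis
    by linarith
qed

section \<open>Gaussian measures with a common covariance\<close>

definition gaussian_density :: "real^'n^'n \<Rightarrow> real^'n \<Rightarrow> real^'n \<Rightarrow> real" where
  "gaussian_density \<Sigma> m x =
    exp (- ((x - m) \<bullet> (matrix_inv \<Sigma> *v (x - m))) / 2) / sqrt ((2 * pi) ^ CARD('n) * det \<Sigma>)"

lemma gaussian_eq_density: "gaussian m \<Sigma> = density lborel (\<lambda>x. ennreal (gaussian_density \<Sigma> m x))"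
  by (simp add: gaussian_def gaussian_density_def)

lemma sets_gaussian [simp]: "sets (gaussian m \<Sigma>) = sets borel"
  by (simp add: gaussian_def)

lemma borel_measurable_gaussian_density [measurable]:
  fixes f g :: "'a \<Rightarrow> real^'n"
  assumes [measurable]: "f \<in> borel_measurable M" "g \<in> borel_measurable M"
  shows "(\<lambda>z. gaussian_density \<Sigma> (f z) (g z)) \<in> borel_measurable M"
  unfolding gaussian_density_def
  using measurable_compose[OF borel_measurable_diff[OF assms(2,1)] borel_measurable_quadratic_form]
  by measurable

locale gaussian_covariance =
  fixes S \<Sigma> :: "real^'n^'n"
  assumes S_symmetric: "transpose S = S"
    and S_squared: "S ** S = \<Sigma>"
    and Sigma_pos_def: "\<And>v. v \<noteq> 0 \<Longrightarrow> v \<bullet> (\<Sigma> *v v) > 0"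
begin

lemma invertible_Sigma: "invertible \<Sigma>"
proof -
  have "inj ((*v) \<Sigma>)"
    using Sigma_pos_def by (intro linear_injective_0[THEN iffD2]) (auto, metis inner_zero_right less_irrefl)
  then show ?thesis
    using det_nz_iff_inj[of "(*v) \<Sigma>"] by (simp add: invertible_det_nz)
qed

lemma Sigma_matrix_inv: "\<Sigma> ** matrix_inv \<Sigma> = mat 1 \<and> matrix_inv \<Sigma> ** \<Sigma> = mat 1"
  using invertible_Sigma unfolding invertible_def matrix_inv_def by (rule someI_ex)

lemma det_Sigma: "det \<Sigma> = (det S)\<^sup>2"
  using S_squared det_mul by (metis power2_eq_square)

lemma det_Sigma_pos: "det \<Sigma> > 0"
  using invertible_Sigma det_Sigma by (simp add: invertible_det_nz)

lemma S_matrix_inv_S: "S ** matrix_inv \<Sigma> ** S = mat 1"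
proof -
  have "det S \<noteq> 0"
    using det_Sigma_pos det_Sigma by auto
  then obtain S' where S': "S' ** S = mat 1"
    by (metis invertible_det_nz invertible_def)
  have "S ** (S ** matrix_inv \<Sigma> ** S) = S"
    using Sigma_matrix_inv S_squared by (metis matrix_mul_assoc matrix_mul_lid)
  then have "S' ** S ** (S ** matrix_inv \<Sigma> ** S) = S' ** S"
    by (metis matrix_mul_assoc)
  with S' show ?thesis
    by (simp add: matrix_mul_lid)
qed

lemma quadratic_form_matrix_inv_nonneg: "0 \<le> h \<bullet> (matrix_inv \<Sigma> *v h)"
proof -
  define w where "w = matrix_inv \<Sigma> *v h"
  have "h = \<Sigma> *v w"
    using Sigma_matrix_inv by (simp add: w_def matrix_vector_mul_assoc)
  then have "h \<bullet> (matrix_inv \<Sigma> *v h) = w \<bullet> (\<Sigma> *v w)"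
    unfolding w_def[symmetric] by (simp add: inner_commute)
  also have "\<dots> \<ge> 0"
    using Sigma_pos_def[of w] by (cases "w = 0") auto
  finally show ?thesis .
qed

lemma quadratic_form_half_Sigma:
  "((1/2) *\<^sub>R (\<Sigma> *v d)) \<bullet> (matrix_inv \<Sigma> *v ((1/2) *\<^sub>R (\<Sigma> *v d))) = (norm (S *v d))\<^sup>2 / 4"
proof -
  have "matrix_inv \<Sigma> *v ((1/2) *\<^sub>R (\<Sigma> *v d)) = (1/2) *\<^sub>R d"
    using Sigma_matrix_inv by (simp add: matrix_vector_mult_scaleR matrix_vector_mul_assoc)
  moreover have "(\<Sigma> *v d) \<bullet> d = (S *v d) \<bullet> (S *v d)"
    using S_squared inner_matrix_vector_mult_symmetric[OF S_symmetric, of "S *v d" d]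
    by (metis matrix_vector_mul_assoc)
  ultimately show ?thesis
    by (simp add: power2_norm_eq_inner)
qed

lemma nn_integral_gaussian_kernel:
  "(\<integral>\<^sup>+ x. ennreal (exp (- ((x - m) \<bullet> (matrix_inv \<Sigma> *v (x - m))) / 2)) \<partial>lborel)
     = ennreal (sqrt ((2 * pi) ^ CARD('n) * det \<Sigma>))"
proof -
  have "det (matrix ((*v) S)) \<noteq> 0"
    using det_Sigma_pos det_Sigma by (auto simp: matrix_of_matrix_vector_mul)
  then have "(\<integral>\<^sup>+ x. ennreal (exp (- ((x - m) \<bullet> (matrix_inv \<Sigma> *v (x - m))) / 2)) \<partial>lborel)
      = ennreal \<bar>det S\<bar> *
        (\<integral>\<^sup>+ y. ennreal (exp (- ((S *v y) \<bullet> (matrix_inv \<Sigma> *v (S *v y))) / 2)) \<partial>lborel)"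
    by (subst nn_integral_lborel_affine[where f = "(*v) S" and c = m])
      (simp_all add: matrix_of_matrix_vector_mul)
  also have "(\<lambda>y. (S *v y) \<bullet> (matrix_inv \<Sigma> *v (S *v y))) = (\<lambda>y::real^'n. y \<bullet> y)"
    using S_matrix_inv_S
    by (simp add: inner_matrix_vector_mult_symmetric[OF S_symmetric] matrix_vector_mul_assoc
        matrix_mul_assoc)
  also have "ennreal \<bar>det S\<bar> * (\<integral>\<^sup>+ y. ennreal (exp (- ((y::real^'n) \<bullet> y) / 2)) \<partial>lborel)
      = ennreal \<bar>det S\<bar> * ennreal (sqrt (2 * pi) ^ CARD('n))"
    by (subst nn_integral_exp_neg_inner_half) simp
  also have "\<dots> = ennreal (sqrt ((2 * pi) ^ CARD('n) * det \<Sigma>))"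
  proof -
    have "sqrt (det \<Sigma>) = \<bar>det S\<bar>"
      by (simp add: det_Sigma)
    then show ?thesis
      by (simp add: ennreal_mult[symmetric] real_sqrt_mult real_sqrt_power mult.commute power_mult_distrib
          del: ennreal_mult')
  qed
  finally show ?thesis .
qed

lemma gaussian_density_pos: "gaussian_density \<Sigma> m x > 0"
  using det_Sigma_pos by (simp add: gaussian_density_def)

lemma nn_integral_gaussian_density: "(\<integral>\<^sup>+ x. ennreal (gaussian_density \<Sigma> m x) \<partial>lborel) = 1"
proof -
  define c where "c = sqrt ((2 * pi) ^ CARD('n) * det \<Sigma>)"
  have "c > 0"
    using det_Sigma_pos by (simp add: c_def)
  have "(\<integral>\<^sup>+ x. ennreal (gaussian_density \<Sigma> m x) \<partial>lborel)
      = (\<integral>\<^sup>+ x. ennreal (exp (- ((x - m) \<bullet> (matrix_inv \<Sigma> *v (x - m))) / 2)) * ennreal (1 / c) \<partial>lborel)"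
    using \<open>c > 0\<close> by (intro nn_integral_cong)
      (simp add: gaussian_density_def c_def ennreal_mult[symmetric] del: ennreal_mult')
  also have "\<dots> = ennreal c * ennreal (1 / c)"
    using nn_integral_gaussian_kernel by (subst nn_integral_multc) (auto simp: c_def)
  also have "\<dots> = 1"
    using \<open>c > 0\<close> by (simp add: ennreal_mult[symmetric] del: ennreal_mult')
  finally show ?thesis .
qed

lemma prob_space_gaussian: "prob_space (gaussian m \<Sigma>)"
  by (rule prob_spaceI) (simp add: gaussian_eq_density emeasure_density nn_integral_gaussian_density)

lemma gaussian_density_square_div:
  "(gaussian_density \<Sigma> m2 x)\<^sup>2 / gaussian_density \<Sigma> m1 x
     = exp ((m2 - m1) \<bullet> (matrix_inv \<Sigma> *v (m2 - m1))) * gaussian_density \<Sigma> (2 *\<^sub>R m2 - m1) x"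
proof -
  define c where "c = sqrt ((2 * pi) ^ CARD('n) * det \<Sigma>)"
  have "c > 0"
    using det_Sigma_pos by (simp add: c_def)
  define Q where "Q v = v \<bullet> (matrix_inv \<Sigma> *v v)" for v
  define u where "u = x - m2"
  define h where "h = m2 - m1"
  have shifts: "x - m1 = u + h" "x - (2 *\<^sub>R m2 - m1) = u - h"
    by (auto simp: u_def h_def algebra_simps scaleR_2)
  have "Q (u + h) + Q (u - h) = 2 * Q u + 2 * Q h"
    by (simp add: Q_def matrix_vector_right_distrib matrix_vector_mult_diff_distrib inner_add_left
        inner_add_right inner_diff_left inner_diff_right algebra_simps)
  then have "- Q u + Q (u + h) / 2 = Q h + - Q (u - h) / 2"
    by simp
  have "(gaussian_density \<Sigma> m2 x)\<^sup>2 / gaussian_density \<Sigma> m1 x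
      = exp (- Q u / 2) ^ 2 / c\<^sup>2 / (exp (- Q (u + h) / 2) / c)"
    unfolding gaussian_density_def c_def[symmetric] Q_def u_def[symmetric] shifts
    by (simp add: power_divide)
  also have "\<dots> = exp (- Q u + Q (u + h) / 2) / c"
    using \<open>c > 0\<close> by (simp add: field_simps power2_eq_square exp_add[symmetric] exp_diff)
  also have "\<dots> = exp (Q h) * (exp (- Q (u - h) / 2) / c)"
    by (simp only: \<open>- Q u + Q (u + h) / 2 = Q h + - Q (u - h) / 2\<close> exp_add times_divide_eq_right)
  also have "\<dots> = exp ((m2 - m1) \<bullet> (matrix_inv \<Sigma> *v (m2 - m1))) * gaussian_density \<Sigma> (2 *\<^sub>R m2 - m1) x"
    unfolding gaussian_density_def c_def[symmetric] Q_def shifts h_def by simp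
  finally show ?thesis .
qed

lemma chi_square_gaussian:
  "(\<integral>\<^sup>+ x. ennreal ((gaussian_density \<Sigma> m2 x - gaussian_density \<Sigma> m1 x)\<^sup>2 / gaussian_density \<Sigma> m1 x) \<partial>lborel)
     = ennreal (exp ((m2 - m1) \<bullet> (matrix_inv \<Sigma> *v (m2 - m1))) - 1)"
proof -
  let ?p = "gaussian_density \<Sigma> m1" and ?q = "gaussian_density \<Sigma> m2"
    and ?r = "gaussian_density \<Sigma> (2 *\<^sub>R m2 - m1)"
  define e where "e = exp ((m2 - m1) \<bullet> (matrix_inv \<Sigma> *v (m2 - m1)))"
  have "e \<ge> 1"
    using quadratic_form_matrix_inv_nonneg by (simp add: e_def)
  let ?X = "\<integral>\<^sup>+ x. ennreal ((?q x - ?p x)\<^sup>2 / ?p x) \<partial>lborel"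
  text \<open>Expanding the square, \<open>(q - p)\<^sup>2 / p + 2 q = q\<^sup>2 / p + p\<close>, and each density integrates to \<open>1\<close>.\<close>
  have "?X + 2 = ?X + (\<integral>\<^sup>+ x. 2 * ennreal (?q x) \<partial>lborel)"
    by (simp add: nn_integral_cmult nn_integral_gaussian_density)
  also have "\<dots> = (\<integral>\<^sup>+ x. ennreal e * ennreal (?r x) + ennreal (?p x) \<partial>lborel)"
  proof (subst nn_integral_add[symmetric], simp, simp, intro nn_integral_cong)
    fix x
    have "(?q x - ?p x)\<^sup>2 / ?p x + 2 * ?q x = e * ?r x + ?p x"
      using gaussian_density_pos[of m1 x] gaussian_density_square_div[of m2 x m1]
      by (simp add: e_def field_simps power2_eq_square)
    moreover have "0 \<le> (?q x - ?p x)\<^sup>2 / ?p x" "0 \<le> ?q x" "0 \<le> ?r x" "0 \<le> ?p x"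
      using gaussian_density_pos[of m1 x] gaussian_density_pos[of m2 x]
        gaussian_density_pos[of "2 *\<^sub>R m2 - m1" x] by (auto intro: less_imp_le)
    ultimately show "ennreal ((?q x - ?p x)\<^sup>2 / ?p x) + 2 * ennreal (?q x)
        = ennreal e * ennreal (?r x) + ennreal (?p x)"
      using \<open>e \<ge> 1\<close> ennreal_plus[of "(?q x - ?p x)\<^sup>2 / ?p x" "2 * ?q x"]
        ennreal_plus[of "e * ?r x" "?p x"] ennreal_mult[of 2 "?q x"] ennreal_mult[of e "?r x"]
      by (simp del: ennreal_plus)
  qed
  also have "\<dots> = ennreal e + 1"
    by (simp add: nn_integral_add nn_integral_cmult nn_integral_gaussian_density)
  also have "\<dots> = ennreal (e - 1) + 2"
    using \<open>e \<ge> 1\<close> ennreal_plus[of "e - 1" 1] by (simp add: add.assoc one_add_one)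
  finally show ?thesis
    by (simp add: e_def ennreal_add_left_cancel add.commute[of _ 2])
qed

lemma measure_gaussian_le:
  assumes "A \<in> sets borel" and "t > 0"
  shows "measure (gaussian m2 \<Sigma>) A \<le> measure (gaussian m1 \<Sigma>) A
     + t / 2 * (exp ((m2 - m1) \<bullet> (matrix_inv \<Sigma> *v (m2 - m1))) - 1) + 1 / (2 * t)"
proof -
  interpret G1: prob_space "gaussian m1 \<Sigma>"
    by (rule prob_space_gaussian)
  interpret G2: prob_space "gaussian m2 \<Sigma>"
    by (rule prob_space_gaussian)
  have "exp ((m2 - m1) \<bullet> (matrix_inv \<Sigma> *v (m2 - m1))) \<ge> 1"
    using quadratic_form_matrix_inv_nonneg by simp
  with assms emeasure_density_le_chi_square[of "gaussian_density \<Sigma> m1" lborel "gaussian_density \<Sigma> m2" A t]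
  have "ennreal (measure (gaussian m2 \<Sigma>) A) \<le> ennreal (measure (gaussian m1 \<Sigma>) A
     + t / 2 * (exp ((m2 - m1) \<bullet> (matrix_inv \<Sigma> *v (m2 - m1))) - 1) + 1 / (2 * t))"
    by (simp add: gaussian_eq_density[symmetric] G1.emeasure_eq_measure G2.emeasure_eq_measure
        gaussian_density_pos chi_square_gaussian nn_integral_gaussian_density
        ennreal_plus[symmetric] ennreal_mult[symmetric] del: ennreal_plus ennreal_mult')
  with \<open>t > 0\<close> \<open>exp _ \<ge> 1\<close> show ?thesis
    by (subst (asm) ennreal_le_iff) auto
qed

lemma measurable_gaussian_kernel:
  assumes [measurable]: "m \<in> borel_measurable M"
  shows "(\<lambda>y. gaussian (m y) \<Sigma>) \<in> measurable M (subprob_algebra borel)"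
proof (rule measurable_subprob_algebra)
  fix X :: "(real^'n) set"
  assume "X \<in> sets borel"
  then show "(\<lambda>y. emeasure (gaussian (m y) \<Sigma>) X) \<in> borel_measurable M"
    by (simp add: gaussian_eq_density emeasure_density)
qed (auto intro: prob_space_gaussian prob_space_imp_subprob_space)

lemma abs_measure_gaussian_shift_le:
  assumes "A \<in> sets borel" and "t > 0"
  shows "\<bar>measure (gaussian (c + (1/2) *\<^sub>R (\<Sigma> *v w)) \<Sigma>) A - measure (gaussian c \<Sigma>) A\<bar>
    \<le> t / 4 * (exp ((1/2) * (norm (S *v w))\<^sup>2) - 1) + 1 / (2 * t)"
proof -
  let ?r = "(norm (S *v w))\<^sup>2" and ?c' = "c + (1/2) *\<^sub>R (\<Sigma> *v w)"
  have "?c' - c = (1/2) *\<^sub>R (\<Sigma> *v w)"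
    by simp
  then have Q: "(?c' - c) \<bullet> (matrix_inv \<Sigma> *v (?c' - c)) = ?r / 4"
    by (simp only: quadratic_form_half_Sigma)
  have "c - ?c' = (1/2) *\<^sub>R (\<Sigma> *v (- w))"
    by (simp add: matrix_vector_mult_uminus_right)
  then have Q': "(c - ?c') \<bullet> (matrix_inv \<Sigma> *v (c - ?c')) = ?r / 4"
    by (simp only: quadratic_form_half_Sigma) (simp add: matrix_vector_mult_uminus_right)
  have "\<bar>measure (gaussian ?c' \<Sigma>) A - measure (gaussian c \<Sigma>) A\<bar>
      \<le> t / 2 * (exp (?r / 4) - 1) + 1 / (2 * t)"
    using measure_gaussian_le[OF assms, of ?c' c] measure_gaussian_le[OF assms, of c ?c']
    unfolding Q Q' by linarith
  also have "\<dots> \<le> t / 4 * (exp ((1/2) * ?r) - 1) + 1 / (2 * t)"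
    using exp_minus_one_le_half_exp_double[of "?r / 4"] \<open>t > 0\<close> by simp
  finally show ?thesis .
qed

theorem tv_dist_gaussian_mixture_le:
  fixes w :: "'y \<Rightarrow> real^'n"
  assumes "prob_space F" and [measurable]: "w \<in> borel_measurable F" and "d \<ge> 0"
    and int_le: "(\<integral>\<^sup>+ y. ennreal (exp ((1/2) * (norm (S *v w y))\<^sup>2) - 1) \<partial>F) \<le> ennreal d"
  shows "tv_dist (gaussian c \<Sigma>) (F \<bind> (\<lambda>y. gaussian (c + (1/2) *\<^sub>R (\<Sigma> *v w y)) \<Sigma>)) \<le> sqrt (d / 2)"
proof (rule tv_dist_le_sqrt[OF \<open>d \<ge> 0\<close>])
  interpret prob_space F
    by (rule assms)
  fix A t
  assume "A \<in> sets (gaussian c \<Sigma>)" and "(t::real) > 0"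
  then have "A \<in> sets borel"
    by simp
  let ?b = "\<lambda>y. t / 4 * (exp ((1/2) * (norm (S *v w y))\<^sup>2) - 1) + 1 / (2 * t)"
  have "\<bar>measure (F \<bind> (\<lambda>y. gaussian (c + (1/2) *\<^sub>R (\<Sigma> *v w y)) \<Sigma>)) A - measure (gaussian c \<Sigma>) A\<bar>
      \<le> t / 4 * d + 1 / (2 * t)"
  proof (rule abs_measure_bind_diff_le[where b = ?b])
    show "(\<lambda>y. gaussian (c + (1/2) *\<^sub>R (\<Sigma> *v w y)) \<Sigma>) \<in> measurable F (subprob_algebra borel)"
      by (rule measurable_gaussian_kernel) simp
    show "\<bar>measure (gaussian (c + (1/2) *\<^sub>R (\<Sigma> *v w y)) \<Sigma>) A - measure (gaussian c \<Sigma>) A\<bar> \<le> ?b y"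
      for y
      using abs_measure_gaussian_shift_le[OF \<open>A \<in> sets borel\<close> \<open>t > 0\<close>] .
    show "(\<integral>\<^sup>+ y. ennreal (?b y) \<partial>F) \<le> ennreal (t / 4 * d + 1 / (2 * t))"
      using \<open>t > 0\<close> \<open>d \<ge> 0\<close> int_le by (intro nn_integral_affine_le) auto
  qed (use \<open>A \<in> sets borel\<close> \<open>t > 0\<close> \<open>d \<ge> 0\<close> in \<open>auto intro: assms prob_space_gaussian\<close>)
  then show "\<bar>measure (gaussian c \<Sigma>) A - measure (F \<bind> (\<lambda>y. gaussian (c + (1/2) *\<^sub>R (\<Sigma> *v w y)) \<Sigma>)) A\<bar>
      \<le> t / 4 * d + 1 / (2 * t)"
    by (simp add: abs_minus_commute)
qed

end

section \<open>The noisy Langevin kernel\<close>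

theorem lemma1:
  fixes \<pi> :: "real^'n \<Rightarrow> real"
    and gradlog :: "real^'n \<Rightarrow> real^'n"
    and \<Sigma> S :: "real^'n^'n"
    and F :: "real^'n \<Rightarrow> 'y measure"
    and ghat :: "real^'n \<Rightarrow> 'y \<Rightarrow> real^'n"
    and P Phat :: "real^'n \<Rightarrow> (real^'n) measure"
    and \<delta> :: ennreal
  assumes pi_pos: "\<And>x. \<pi> x > 0"
    and pi_meas: "\<pi> \<in> borel_measurable lborel"
    and pi_prob: "(\<integral>\<^sup>+ x. ennreal (\<pi> x) \<partial>lborel) = 1"
    and pi_diff: "\<And>x. \<pi> differentiable (at x)"
    and gradlog: "\<And>\<theta>. ((\<lambda>x. ln (\<pi> x)) has_derivative (\<lambda>h. gradlog \<theta> \<bullet> h)) (at \<theta>)"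
    and Sigma_sym: "transpose \<Sigma> = \<Sigma>"
    and Sigma_pd: "\<And>v. v \<noteq> 0 \<Longrightarrow> v \<bullet> (\<Sigma> *v v) > 0"
    and S_sym: "transpose S = S"
    and S_psd: "\<And>v. v \<bullet> (S *v v) \<ge> 0"
    and S_sq: "S ** S = \<Sigma>"
    and F_prob: "\<And>\<theta>. prob_space (F \<theta>)"
    and ghat_meas: "\<And>\<theta>. ghat \<theta> \<in> borel_measurable (F \<theta>)"
    and P_def: "\<And>\<theta>. P \<theta> = gaussian (\<theta> + (1/2) *\<^sub>R (\<Sigma> *v gradlog \<theta>)) \<Sigma>"
    and Phat_def: "\<And>\<theta>. Phat \<theta> = F \<theta> \<bind> (\<lambda>y. gaussian (\<theta> + (1/2) *\<^sub>R (\<Sigma> *v ghat \<theta> y)) \<Sigma>)"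
    and delta_def: "\<delta> = (SUP \<theta>. \<integral>\<^sup>+ y. ennreal (exp ((1/2) * (norm (S *v (gradlog \<theta> - ghat \<theta> y)))\<^sup>2) - 1) \<partial>F \<theta>)"
  shows "\<delta> \<noteq> \<top> \<Longrightarrow> kernel_dist P Phat \<le> sqrt (enn2real \<delta> / 2)"
proof -
  assume "\<delta> \<noteq> \<top>"
  interpret gaussian_covariance S \<Sigma>
    using S_sym S_sq Sigma_pd by unfold_locales
  have "tv_dist (P \<theta>) (Phat \<theta>) \<le> sqrt (enn2real \<delta> / 2)" for \<theta>
  proof -
    let ?c = "\<theta> + (1/2) *\<^sub>R (\<Sigma> *v gradlog \<theta>)" and ?w = "\<lambda>y. ghat \<theta> y - gradlog \<theta>"
    have "Phat \<theta> = F \<theta> \<bind> (\<lambda>y. gaussian (?c + (1/2) *\<^sub>R (\<Sigma> *v ?w y)) \<Sigma>)"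
      by (simp add: Phat_def matrix_vector_mult_diff_distrib algebra_simps)
    moreover have "(\<integral>\<^sup>+ y. ennreal (exp ((1/2) * (norm (S *v ?w y))\<^sup>2) - 1) \<partial>F \<theta>) \<le> \<delta>"
    proof -
      have "norm (S *v ?w y) = norm (S *v (gradlog \<theta> - ghat \<theta> y))" for y
        by (metis matrix_vector_mult_diff_distrib norm_minus_commute)
      moreover have "(\<integral>\<^sup>+ y. ennreal (exp ((1/2) * (norm (S *v (gradlog \<theta> - ghat \<theta> y)))\<^sup>2) - 1) \<partial>F \<theta>)
          \<le> \<delta>"
        unfolding delta_def by (rule SUP_upper) simp
      ultimately show ?thesis
        by simp
    qed
    moreover have "\<delta> = ennreal (enn2real \<delta>)"
      using \<open>\<delta> \<noteq> \<top>\<close> by (simp add: less_top)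
    ultimately show ?thesis
      using tv_dist_gaussian_mixture_le[OF F_prob, where w = ?w and d = "enn2real \<delta>" and c = ?c] ghat_meas
      by (simp add: P_def)
  qed
  then show "kernel_dist P Phat \<le> sqrt (enn2real \<delta> / 2)"
    unfolding kernel_dist_def by (rule cSUP_least[OF UNIV_not_empty])
qed

end
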